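(* Let $\phi$ be a good potential on $\mathcal D$ with $\phi>0$, total potential $\Phi$. Let $\boldsymbol x\in\mathcal D^N$, $t>0$, $\boldsymbol p\in\Delta^{N-1}$ with $p_i\propto\partial_x\phi(x_i,t)$ (arbitrary if all these vanish), $\boldsymbol\ell\in\mathbb{R}^N$, $\Delta x_i=\langle\boldsymbol p,\boldsymbol\ell\rangle-\ell_i$, $\Delta t\ge0$, $(\boldsymbol x',t')=(\boldsymbol x+\Delta\boldsymbol x,t+\Delta t)$ and $\boldsymbol\Delta=(\Delta\boldsymbol x,\Delta t)\in\mathbb{R}^{N+1}$. Then there is a point $(\bar{\boldsymbol x},\bar t)$ on the line segment between $(\boldsymbol x,t)$ and $(\boldsymbol x',t')$ such that $$\log\Phi(\boldsymbol x',t')-\log\Phi(\boldsymbol x,t)=-\frac{\sum_{i=1}^N\partial_{xx}\phi(x_i,t)\,\Delta t}{2\,\Phi(\boldsymbol x,t)}+\frac12\nabla^2\log\Phi(\bar{\boldsymbol x},\bar t)[\boldsymbol\Delta,\boldsymbol\Delta].$$ In particular, if $\log\Phi(\boldsymbol x',t')=\log\Phi(\boldsymbol x,t)$, then $$\Delta t=\frac{\Phi(\boldsymbol x,t)\,\nabla^2\log\Phi(\bar{\boldsymbol x},\bar t)[\boldsymbol\Delta,\boldsymbol\Delta]}{\sum_{i=1}^N\partial_{xx}\phi(x_i,t)}.$$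
   Context: Good potential: let $\mathcal D=\mathbb{R}$ or $\mathcal D=[y_0,\infty)$, with Euclidean projection $\Pi_{\mathcal D}$. A function $\phi:\mathbb{R}\times[0,\infty)\to\mathbb{R}$ is a good potential on $\mathcal D$ if (1) it is jointly strictly convex, (2) three times differentiable, (3) $\partial_y\phi\ge0$, (4) $\partial_t\phi\le0$, (5) $\lim_{t\to\infty}\phi(y,t)=\inf_{y,t}\phi(y,t)\ge0$, (6) $\phi(\Pi_{\mathcal D}(y),t)\le\phi(y,t)$ for all $y$, and (7) $\partial_t\phi=-\tfrac12\partial_{yy}\phi$. Total potential $\Phi(\boldsymbol x,t)=\sum_{i=1}^N\phi(x_i,t)$. For a twice differentiable $f$, $\nabla^2 f(\boldsymbol z)[\boldsymbol a,\boldsymbol b]=\boldsymbol a^{\mathsf T}\nabla^2 f(\boldsymbol z)\boldsymbol b$. *)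

theory Defs
  imports "HOL-Analysis.Analysis"
begin

definition pdom :: "(real \<times> real) set" where
  "pdom = UNIV \<times> {0..}"

definition strictly_convex_on :: "'a::real_vector set \<Rightarrow> ('a \<Rightarrow> real) \<Rightarrow> bool" where
  "strictly_convex_on S f \<longleftrightarrow>
     (\<forall>x\<in>S. \<forall>y\<in>S. \<forall>u::real. x \<noteq> y \<and> 0 < u \<and> u < 1 \<longrightarrow>
        f (u *\<^sub>R x + (1 - u) *\<^sub>R y) < u * f x + (1 - u) * f y)"

definition D1 :: "'a::real_normed_vector set \<Rightarrow> ('a \<Rightarrow> real) \<Rightarrow> 'a \<Rightarrow> 'a \<Rightarrow> real" where
  "D1 S f z a = frechet_derivative f (at z within S) a"

definition D2 :: "'a::real_normed_vector set \<Rightarrow> ('a \<Rightarrow> real) \<Rightarrow> 'a \<Rightarrow> 'a \<Rightarrow> 'a \<Rightarrow> real" where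
  "D2 S f z a b = frechet_derivative (\<lambda>w. D1 S f w a) (at z within S) b"

definition thrice_differentiable_on :: "'a::real_normed_vector set \<Rightarrow> ('a \<Rightarrow> real) \<Rightarrow> bool" where
  "thrice_differentiable_on S f \<longleftrightarrow>
     (\<forall>z\<in>S. f differentiable (at z within S)) \<and>
     (\<forall>a. \<forall>z\<in>S. (\<lambda>w. D1 S f w a) differentiable (at z within S)) \<and>
     (\<forall>a b. \<forall>z\<in>S. (\<lambda>w. D2 S f w a b) differentiable (at z within S))"

definition dy :: "(real \<times> real \<Rightarrow> real) \<Rightarrow> real \<Rightarrow> real \<Rightarrow> real" where
  "dy phi y t = D1 pdom phi (y, t) (1, 0)"

definition dt :: "(real \<times> real \<Rightarrow> real) \<Rightarrow> real \<Rightarrow> real \<Rightarrow> real" where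
  "dt phi y t = D1 pdom phi (y, t) (0, 1)"

definition dyy :: "(real \<times> real \<Rightarrow> real) \<Rightarrow> real \<Rightarrow> real \<Rightarrow> real" where
  "dyy phi y t = D2 pdom phi (y, t) (1, 0) (1, 0)"

definition admissible_dom :: "real set \<Rightarrow> bool" where
  "admissible_dom D \<longleftrightarrow> D = UNIV \<or> (\<exists>y0. D = {y0..})"

definition good_potential :: "real set \<Rightarrow> (real \<times> real \<Rightarrow> real) \<Rightarrow> bool" where
  "good_potential D phi \<longleftrightarrow>
     admissible_dom D \<and>
     strictly_convex_on pdom phi \<and>
     thrice_differentiable_on pdom phi \<and>
     (\<forall>y. \<forall>t\<ge>0. dy phi y t \<ge> 0) \<and>
     (\<forall>y. \<forall>t\<ge>0. dt phi y t \<le> 0) \<and>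
     (\<forall>y. ((\<lambda>t. phi (y, t)) \<longlongrightarrow> Inf (phi ` pdom)) at_top) \<and>
     Inf (phi ` pdom) \<ge> 0 \<and>
     (\<forall>y. \<forall>t\<ge>0. phi (closest_point D y, t) \<le> phi (y, t)) \<and>
     (\<forall>y. \<forall>t\<ge>0. dt phi y t = - (1/2) * dyy phi y t)"

definition total_pot :: "(real \<times> real \<Rightarrow> real) \<Rightarrow> (real^'n) \<times> real \<Rightarrow> real" where
  "total_pot phi z = (\<Sum>i\<in>UNIV. phi (fst z $ i, snd z))"

definition hess :: "('a::real_normed_vector \<Rightarrow> real) \<Rightarrow> 'a \<Rightarrow> 'a \<Rightarrow> 'a \<Rightarrow> real" where
  "hess f z a b = frechet_derivative (\<lambda>w. frechet_derivative f (at w) a) (at z) b"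

end

theory Submission
  imports Defs
begin

(*
  On the segment s \<mapsto> (x, t) + s \<Delta>, 0 \<le> s \<le> 1, ln \<Phi> is a twice differentiable real
  function, so Taylor's theorem with Lagrange remainder produces the Hessian term at an
  intermediate point. The first-order term is
  \<Sum>_i (\<Delta>x_i \<partial>_y\<phi>(x_i, t) + \<Delta>t \<partial>_t\<phi>(x_i, t)) / \<Phi>(x, t). Because p is proportional to the
  nonnegative weights \<partial>_y\<phi>(x_i, t), the sum \<Sum>_i \<partial>_y\<phi>(x_i, t) (\<langle>p, l\<rangle> - l_i) vanishes, and
  the heat equation \<partial>_t\<phi> = -\<partial>_yy\<phi> / 2 turns the rest into -\<Delta>t \<Sum>_i \<partial>_yy\<phi>(x_i, t) / 2.
  The second claim is the first solved for \<Delta>t.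
*)

definition twice_differentiable_on ::
    "'a::real_normed_vector set \<Rightarrow> ('a \<Rightarrow> 'b::real_normed_vector) \<Rightarrow> bool" where
  "twice_differentiable_on S f \<longleftrightarrow>
     (\<forall>z\<in>S. f differentiable (at z) \<and>
        (\<forall>a. (\<lambda>w. frechet_derivative f (at w) a) differentiable (at z)))"

lemma differentiable_transform_within_open:
  assumes "f differentiable (at x)" "open S" "x \<in> S" "\<And>y. y \<in> S \<Longrightarrow> f y = g y"
  shows "g differentiable (at x)"
  using assms has_derivative_transform_within_open unfolding differentiable_def by metis

lemma frechet_derivative_sum_at:
  assumes "\<And>i. i \<in> I \<Longrightarrow> f i differentiable (at z)"
  shows "frechet_derivative (\<lambda>w. \<Sum>i\<in>I. f i w) (at z) a = (\<Sum>i\<in>I. frechet_derivative (f i) (at z) a)"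
proof -
  have "((\<lambda>w. \<Sum>i\<in>I. f i w) has_derivative (\<lambda>a. \<Sum>i\<in>I. frechet_derivative (f i) (at z) a)) (at z)"
    using assms by (intro has_derivative_sum) (simp add: frechet_derivative_works)
  then show ?thesis by (metis frechet_derivative_at)
qed

lemma frechet_derivative_compose_linear:
  assumes "bounded_linear L" "f differentiable (at (L z))"
  shows "frechet_derivative (\<lambda>w. f (L w)) (at z) a = frechet_derivative f (at (L z)) (L a)"
proof -
  have "frechet_derivative L (at z) = L"
    using assms(1) bounded_linear_imp_has_derivative frechet_derivative_at by metis
  moreover have "L differentiable (at z)"
    using assms(1) bounded_linear_imp_differentiable by blast
  ultimately show ?thesis
    using frechet_derivative_compose[of L z f] assms(2) by (simp add: o_def)
qed

lemma frechet_derivative_ln: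
  fixes f :: "'a::real_normed_vector \<Rightarrow> real"
  assumes "f differentiable (at z)" "f z > 0"
  shows "frechet_derivative (\<lambda>w. ln (f w)) (at z) a = frechet_derivative f (at z) a / f z"
proof -
  have "((\<lambda>w. ln (f w)) has_derivative (\<lambda>a. frechet_derivative f (at z) a * inverse (f z))) (at z)"
    using assms by (intro has_derivative_ln) (simp_all add: frechet_derivative_works)
  then show ?thesis by (metis frechet_derivative_at divide_inverse)
qed

lemma twice_differentiable_on_compose_linear:
  assumes f: "twice_differentiable_on T f" and L: "bounded_linear L"
    and S: "open S" "L ` S \<subseteq> T"
  shows "twice_differentiable_on S (\<lambda>w. f (L w))"
  unfolding twice_differentiable_on_def
proof (intro ballI allI conjI)
  fix z a assume "z \<in> S"
  then have fz: "f differentiable (at (L z))"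
      and f'z: "(\<lambda>w. frechet_derivative f (at w) (L a)) differentiable (at (L z))"
    using f S(2) unfolding twice_differentiable_on_def by blast+
  show "(\<lambda>w. f (L w)) differentiable (at z)"
    using differentiable_compose[where f=f and g=L, OF fz] L bounded_linear_imp_differentiable
    by blast
  have "(\<lambda>w. frechet_derivative f (at (L w)) (L a)) differentiable (at z)"
    using differentiable_compose[where g=L, OF f'z] L bounded_linear_imp_differentiable
    by blast
  then show "(\<lambda>w. frechet_derivative (\<lambda>w. f (L w)) (at w) a) differentiable (at z)"
    by (rule differentiable_transform_within_open[OF _ S(1) \<open>z \<in> S\<close>])
       (use f S(2) L in \<open>auto simp: twice_differentiable_on_def frechet_derivative_compose_linear\<close>)
qed

lemma twice_differentiable_on_sum:
  assumes "finite I" "open S" "\<And>i. i \<in> I \<Longrightarrow> twice_differentiable_on S (f i)"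
  shows "twice_differentiable_on S (\<lambda>w. \<Sum>i\<in>I. f i w)"
  unfolding twice_differentiable_on_def
proof (intro ballI allI conjI)
  fix z a assume "z \<in> S"
  with assms(1,3) show "(\<lambda>w. \<Sum>i\<in>I. f i w) differentiable (at z)"
    by (auto simp: twice_differentiable_on_def intro: differentiable_sum)
  from \<open>z \<in> S\<close> assms(1,3) have "(\<lambda>w. \<Sum>i\<in>I. frechet_derivative (f i) (at w) a) differentiable (at z)"
    by (auto simp: twice_differentiable_on_def intro: differentiable_sum)
  then show "(\<lambda>w. frechet_derivative (\<lambda>w. \<Sum>i\<in>I. f i w) (at w) a) differentiable (at z)"
    by (rule differentiable_transform_within_open[OF _ assms(2) \<open>z \<in> S\<close>])
       (use assms(3) in \<open>auto simp: twice_differentiable_on_def frechet_derivative_sum_at\<close>)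
qed

lemma twice_differentiable_on_ln:
  fixes f :: "'a::real_normed_vector \<Rightarrow> real"
  assumes S: "open S" and f: "twice_differentiable_on S f" and pos: "\<And>z. z \<in> S \<Longrightarrow> f z > 0"
  shows "twice_differentiable_on S (\<lambda>w. ln (f w))"
  unfolding twice_differentiable_on_def
proof (intro ballI allI conjI)
  fix z a assume "z \<in> S"
  then have fz: "f differentiable (at z)"
      and f'z: "(\<lambda>w. frechet_derivative f (at w) a) differentiable (at z)"
    using f unfolding twice_differentiable_on_def by blast+
  show "(\<lambda>w. ln (f w)) differentiable (at z)"
    using has_derivative_ln[where g=f, OF pos[OF \<open>z \<in> S\<close>]] fz unfolding differentiable_def by blast
  have "(\<lambda>w. frechet_derivative f (at w) a / f w) differentiable (at z)"
    using f'z fz pos[OF \<open>z \<in> S\<close>] by (intro differentiable_divide) auto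
  then show "(\<lambda>w. frechet_derivative (\<lambda>w. ln (f w)) (at w) a) differentiable (at z)"
    by (rule differentiable_transform_within_open[OF _ S \<open>z \<in> S\<close>])
       (use f pos in \<open>auto simp: twice_differentiable_on_def frechet_derivative_ln\<close>)
qed

lemma has_real_derivative_along_line:
  fixes f :: "'a::real_normed_vector \<Rightarrow> real"
  assumes "f differentiable (at (z + s *\<^sub>R v))"
  shows "((\<lambda>s. f (z + s *\<^sub>R v)) has_real_derivative frechet_derivative f (at (z + s *\<^sub>R v)) v) (at s)"
proof -
  let ?f' = "frechet_derivative f (at (z + s *\<^sub>R v))"
  have "((\<lambda>s. z + s *\<^sub>R v) has_derivative (\<lambda>h. h *\<^sub>R v)) (at s)"
    by (auto intro!: derivative_eq_intros)
  then have "((\<lambda>s. f (z + s *\<^sub>R v)) has_derivative (\<lambda>h. ?f' (h *\<^sub>R v))) (at s)"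
    using assms frechet_derivative_works has_derivative_compose by blast
  moreover have "(\<lambda>h. ?f' (h *\<^sub>R v)) = (\<lambda>h. ?f' v * h)"
    using linear_frechet_derivative[OF assms] by (simp add: linear_scale mult.commute)
  ultimately show ?thesis
    by (simp add: has_field_derivative_def)
qed

lemma taylor_closed_segment_hess:
  fixes F :: "'a::real_normed_vector \<Rightarrow> real"
  assumes F: "twice_differentiable_on S F" and seg: "closed_segment z (z + v) \<subseteq> S"
  shows "\<exists>zb\<in>closed_segment z (z + v).
           F (z + v) = F z + frechet_derivative F (at z) v + hess F zb v v / 2"
proof -
  define g :: "nat \<Rightarrow> real \<Rightarrow> real" where
    "g k s = (if k = 0 then F (z + s *\<^sub>R v)
              else if k = 1 then frechet_derivative F (at (z + s *\<^sub>R v)) v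
              else hess F (z + s *\<^sub>R v) v v)" for k s
  have on_seg: "z + s *\<^sub>R v \<in> closed_segment z (z + v)" if "0 \<le> s" "s \<le> 1" for s
    unfolding closed_segment_def
    by (intro CollectI exI[of _ s]) (simp add: that algebra_simps)
  have "DERIV (g m) s :> g (Suc m) s" if "m < 2" "0 \<le> s" "s \<le> 1" for m s
  proof -
    have "F differentiable (at (z + s *\<^sub>R v))"
      and "(\<lambda>w. frechet_derivative F (at w) v) differentiable (at (z + s *\<^sub>R v))"
      using F seg on_seg[OF that(2,3)] unfolding twice_differentiable_on_def by blast+
    from has_real_derivative_along_line[OF this(1)] has_real_derivative_along_line[OF this(2)]
    show ?thesis
      using \<open>m < 2\<close> by (auto simp: g_def[abs_def] hess_def less_2_cases_iff)
  qed
  then obtain \<xi> :: real where \<xi>: "0 < \<xi>" "\<xi> < 1"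
    and "g 0 1 = (\<Sum>m<2. g m 0 / fact m * 1 ^ m) + g 2 \<xi> / fact 2 * 1 ^ 2"
    using Maclaurin[of 1 2 g "g 0"] by auto
  then have "F (z + v) = F z + frechet_derivative F (at z) v + hess F (z + \<xi> *\<^sub>R v) v v / 2"
    by (simp add: g_def numeral_2_eq_2)
  then show ?thesis
    using on_seg \<xi> by force
qed

lemma at_within_pdom:
  assumes "snd z > 0"
  shows "at z within pdom = at z"
proof (rule at_within_interior)
  show "z \<in> interior pdom"
    using assms by (cases z) (simp add: pdom_def interior_Times)
qed

lemma D1_pdom_eq_frechet_derivative:
  "snd z > 0 \<Longrightarrow> D1 pdom phi z = frechet_derivative phi (at z)"
  unfolding D1_def by (simp add: at_within_pdom)

lemma thrice_differentiable_on_pdom_imp_twice: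
  assumes "thrice_differentiable_on pdom phi"
  shows "twice_differentiable_on (UNIV \<times> {0<..}) phi"
  unfolding twice_differentiable_on_def
proof (intro ballI allI conjI)
  fix z a :: "real \<times> real" assume z: "z \<in> UNIV \<times> {0<..}"
  then have "z \<in> pdom"
    by (auto simp: pdom_def)
  have at_z: "at z within pdom = at z"
    using z by (auto intro: at_within_pdom)
  have "phi differentiable (at z within pdom)"
    and D1_diff: "(\<lambda>w. D1 pdom phi w a) differentiable (at z within pdom)"
    using assms \<open>z \<in> pdom\<close> unfolding thrice_differentiable_on_def by blast+
  then show "phi differentiable (at z)"
    unfolding at_z by blast
  from D1_diff show "(\<lambda>w. frechet_derivative phi (at w) a) differentiable (at z)"
    unfolding at_z by (rule differentiable_transform_within_open[OF _ _ z])
       (auto simp: open_Times D1_pdom_eq_frechet_derivative)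
qed

lemma frechet_derivative_eq_partials:
  assumes "thrice_differentiable_on pdom phi" "t > 0"
  shows "frechet_derivative phi (at (y, t)) (a, b) = a * dy phi y t + b * dt phi y t"
proof -
  have "phi differentiable (at (y, t))"
    using thrice_differentiable_on_pdom_imp_twice[OF assms(1)] assms(2)
    unfolding twice_differentiable_on_def by auto
  then have "linear (frechet_derivative phi (at (y, t)))"
    by (rule linear_frechet_derivative)
  then have "frechet_derivative phi (at (y, t)) (a *\<^sub>R (1, 0) + b *\<^sub>R (0, 1)) =
               a * frechet_derivative phi (at (y, t)) (1, 0) + b * frechet_derivative phi (at (y, t)) (0, 1)"
    by (simp only: linear_add linear_scale real_scaleR_def)
  then show ?thesis
    using assms(2) by (simp add: dy_def dt_def D1_pdom_eq_frechet_derivative)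
qed

lemma bounded_linear_component_time:
  "bounded_linear (\<lambda>z::(real^'n) \<times> real. (fst z $ i, snd z))"
  by (intro bounded_linear_Pair bounded_linear_compose[OF bounded_linear_vec_nth]
      bounded_linear_fst bounded_linear_snd)

lemma total_pot_eq_sum:
  "total_pot phi = (\<lambda>z. \<Sum>i\<in>UNIV. phi (fst z $ i, snd z))"
  by (simp add: fun_eq_iff total_pot_def)

lemma total_pot_pos:
  assumes "\<forall>z\<in>pdom. phi z > 0" "snd w \<ge> 0"
  shows "total_pot phi (w :: (real^'n) \<times> real) > 0"
  unfolding total_pot_def by (rule sum_pos) (use assms in \<open>auto simp: pdom_def\<close>)

lemma twice_differentiable_on_total_pot:
  assumes "twice_differentiable_on (UNIV \<times> {0<..}) phi"
  shows "twice_differentiable_on (UNIV \<times> {0<..}) (total_pot phi :: (real^'n) \<times> real \<Rightarrow> real)"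
  unfolding total_pot_eq_sum
  by (intro twice_differentiable_on_sum twice_differentiable_on_compose_linear[OF assms]
      bounded_linear_component_time) (auto simp: open_Times)

lemma frechet_derivative_total_pot:
  assumes "twice_differentiable_on (UNIV \<times> {0<..}) phi" "snd w > 0"
  shows "frechet_derivative (total_pot phi) (at w) a =
           (\<Sum>i\<in>UNIV. frechet_derivative phi (at (fst w $ i, snd w)) (fst a $ i, snd a))"
  unfolding total_pot_eq_sum
  using assms unfolding twice_differentiable_on_def
  by (subst frechet_derivative_sum_at)
     (auto intro!: differentiable_compose[where g="\<lambda>z. (fst z $ _, snd z)"]
        bounded_linear_imp_differentiable[OF bounded_linear_component_time]
        simp: frechet_derivative_compose_linear[OF bounded_linear_component_time])

lemma twice_differentiable_on_ln_total_pot: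
  assumes "thrice_differentiable_on pdom phi" "\<forall>z\<in>pdom. phi z > 0"
  shows "twice_differentiable_on (UNIV \<times> {0<..})
           (\<lambda>z :: (real^'n) \<times> real. ln (total_pot phi z))"
  using assms
  by (intro twice_differentiable_on_ln twice_differentiable_on_total_pot
      thrice_differentiable_on_pdom_imp_twice total_pot_pos) (auto simp: open_Times)

lemma frechet_derivative_ln_total_pot:
  fixes x dx :: "real^'n"
  assumes "thrice_differentiable_on pdom phi" "\<forall>z\<in>pdom. phi z > 0" "t > 0"
  shows "frechet_derivative (\<lambda>z. ln (total_pot phi z)) (at (x, t)) (dx, dT) =
           (\<Sum>i\<in>UNIV. dx $ i * dy phi (x $ i) t + dT * dt phi (x $ i) t) / total_pot phi (x, t)"
proof -
  have phi2: "twice_differentiable_on (UNIV \<times> {0<..}) phi"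
    using assms(1) by (rule thrice_differentiable_on_pdom_imp_twice)
  have "total_pot phi differentiable (at (x, t))"
    using twice_differentiable_on_total_pot[OF phi2] assms(3)
    unfolding twice_differentiable_on_def by auto
  then show ?thesis
    using assms total_pot_pos[OF assms(2), of "(x, t)"]
    by (simp add: frechet_derivative_ln frechet_derivative_total_pot[OF phi2]
        frechet_derivative_eq_partials)
qed

lemma sum_proportional_weights_centered:
  fixes w :: "'n::finite \<Rightarrow> real" and p l :: "real^'n"
  assumes w_nonneg: "\<And>i. w i \<ge> 0"
    and p_prop: "(\<Sum>j\<in>UNIV. w j) \<noteq> 0 \<longrightarrow> (\<forall>i. p $ i = w i / (\<Sum>j\<in>UNIV. w j))"
  shows "(\<Sum>i\<in>UNIV. w i * (p \<bullet> l - l $ i)) = 0"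
proof (cases "(\<Sum>j\<in>UNIV. w j) = 0")
  case True
  then have "\<forall>i. w i = 0"
    using w_nonneg by (simp add: sum_nonneg_eq_0_iff)
  then show ?thesis by simp
next
  case False
  then have "p \<bullet> l = (\<Sum>i\<in>UNIV. w i * l $ i) / (\<Sum>j\<in>UNIV. w j)"
    using p_prop by (simp add: inner_vec_def sum_divide_distrib)
  moreover have "(\<Sum>i\<in>UNIV. w i * (p \<bullet> l - l $ i)) =
                   (\<Sum>j\<in>UNIV. w j) * (p \<bullet> l) - (\<Sum>i\<in>UNIV. w i * l $ i)"
    by (simp add: right_diff_distrib sum_subtractf sum_distrib_right)
  ultimately show ?thesis
    using False by simp
qed

lemma good_potential_first_order_term:
  fixes x p l dx :: "real^'n"
  assumes gp: "good_potential D phi" and t: "t > 0"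
    and p_prop: "(\<Sum>j\<in>UNIV. dy phi (x $ j) t) \<noteq> 0 \<longrightarrow>
                 (\<forall>i. p $ i = dy phi (x $ i) t / (\<Sum>j\<in>UNIV. dy phi (x $ j) t))"
    and dx_def: "\<forall>i. dx $ i = p \<bullet> l - l $ i"
  shows "(\<Sum>i\<in>UNIV. dx $ i * dy phi (x $ i) t + dT * dt phi (x $ i) t) =
           - (\<Sum>i\<in>UNIV. dyy phi (x $ i) t) * dT / 2"
proof -
  have "(\<Sum>i\<in>UNIV. dy phi (x $ i) t * (p \<bullet> l - l $ i)) = 0"
    using gp t p_prop by (intro sum_proportional_weights_centered) (auto simp: good_potential_def)
  then have "(\<Sum>i\<in>UNIV. dx $ i * dy phi (x $ i) t) = 0"
    using dx_def by (simp add: mult.commute)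
  moreover have "dt phi (x $ i) t = - (1/2) * dyy phi (x $ i) t" for i
    using gp t by (simp add: good_potential_def)
  ultimately have "(\<Sum>i\<in>UNIV. dx $ i * dy phi (x $ i) t + dT * dt phi (x $ i) t) =
                     dT * (- (1/2) * (\<Sum>i\<in>UNIV. dyy phi (x $ i) t))"
    by (simp add: sum_subtractf sum_negf sum_distrib_left)
  then show ?thesis
    by simp
qed

theorem lemma6p3:
  fixes D :: "real set" and phi :: "real \<times> real \<Rightarrow> real"
    and x p l dx :: "real^'n" and t dT :: real
  assumes gp: "good_potential D phi"
    and pos: "\<forall>z\<in>pdom. phi z > 0"
    and xD: "\<forall>i. x $ i \<in> D"
    and tpos: "t > 0"
    and p_nonneg: "\<forall>i. p $ i \<ge> 0"
    and p_sum: "(\<Sum>i\<in>UNIV. p $ i) = 1"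
    and p_prop: "(\<Sum>j\<in>UNIV. dy phi (x $ j) t) \<noteq> 0 \<longrightarrow>
                 (\<forall>i. p $ i = dy phi (x $ i) t / (\<Sum>j\<in>UNIV. dy phi (x $ j) t))"
    and dx_def: "\<forall>i. dx $ i = p \<bullet> l - l $ i"
    and dT_nonneg: "dT \<ge> 0"
  shows "\<exists>zb \<in> closed_segment (x, t) (x + dx, t + dT).
     ln (total_pot phi (x + dx, t + dT)) - ln (total_pot phi (x, t)) =
       - (\<Sum>i\<in>UNIV. dyy phi (x $ i) t) * dT / (2 * total_pot phi (x, t))
       + (1/2) * hess (\<lambda>z. ln (total_pot phi z)) zb (dx, dT) (dx, dT)
     \<and> (ln (total_pot phi (x + dx, t + dT)) = ln (total_pot phi (x, t)) \<and>
        (\<Sum>i\<in>UNIV. dyy phi (x $ i) t) \<noteq> 0 \<longrightarrow>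
        dT = total_pot phi (x, t) * hess (\<lambda>z. ln (total_pot phi z)) zb (dx, dT) (dx, dT)
             / (\<Sum>i\<in>UNIV. dyy phi (x $ i) t))"
proof -
  define F where "F = (\<lambda>z :: (real^'n) \<times> real. ln (total_pot phi z))"
  have td: "thrice_differentiable_on pdom phi"
    using gp by (simp add: good_potential_def)
  have seg: "closed_segment (x, t) ((x, t) + (dx, dT)) \<subseteq> UNIV \<times> {0<..}"
    using tpos dT_nonneg by (intro closed_segment_subset convex_Times) auto
  obtain zb where zb: "zb \<in> closed_segment (x, t) ((x, t) + (dx, dT))"
    and taylor: "F ((x, t) + (dx, dT)) =
                   F (x, t) + frechet_derivative F (at (x, t)) (dx, dT) + hess F zb (dx, dT) (dx, dT) / 2"
    using taylor_closed_segment_hess[OF twice_differentiable_on_ln_total_pot[OF td pos] seg]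
    unfolding F_def by blast
  have "frechet_derivative F (at (x, t)) (dx, dT) =
          - (\<Sum>i\<in>UNIV. dyy phi (x $ i) t) * dT / (2 * total_pot phi (x, t))"
    unfolding F_def frechet_derivative_ln_total_pot[OF td pos tpos]
      good_potential_first_order_term[OF gp tpos p_prop dx_def] by simp
  with taylor have expansion:
    "ln (total_pot phi (x + dx, t + dT)) - ln (total_pot phi (x, t)) =
       - (\<Sum>i\<in>UNIV. dyy phi (x $ i) t) * dT / (2 * total_pot phi (x, t))
       + (1/2) * hess (\<lambda>z. ln (total_pot phi z)) zb (dx, dT) (dx, dT)"
    unfolding F_def by simp
  moreover have "total_pot phi (x, t) > 0"
    using pos tpos by (simp add: total_pot_pos)
  ultimately show ?thesis
    using zb by (intro bexI[of _ zb] conjI impI) (auto simp: field_simps)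
qed

end
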